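(* Let $\mathbf{F}\in[L^2(\mathbb{R}^2)]^2$ have compact support $\Omega$ (a bounded domain), fix $\mathbf{z}\in\mathbb{R}^2\setminus\overline\Omega$, let $\mathcal{T}=\{\tau_1,\tau_2,\tau_3\}$ be three different complex numbers with $\tau_2-\tau_1$, $\tau_3-\tau_1$ linearly independent over $\mathbb{R}$, fix $\hat{\mathbf{x}}_0\in\mathbb{S}$ and choose $\mathbf{q}_0\in\mathbb{S}$ with $\mathbf{q}_0\cdot\hat{\mathbf{x}}_0\neq0$. If the set $$\{\alpha\in\mathbb{R}:\ \Pi_\alpha\subset S_\Omega(\hat{\mathbf{x}}_0),\ f_{\hat{\mathbf{x}}_0}(\alpha)=0\}$$ has Lebesgue measure zero, then the strip $S_\Omega(\hat{\mathbf{x}}_0)$ is uniquely determined by the phaseless data set $$\mathcal{E}_p=\{|u^\infty_{\mathbf{F}\cup\{\mathbf{z}\},p}(\hat{\mathbf{x}}_0,\mathbf{q}_0,\omega,\tau)|:\ \omega\in\mathbb{W},\ \tau\in\mathcal{T}\}.$$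
   Context: $\mathbb{W}=(\omega_{min},\omega_{max})$, $0<\omega_{min}<\omega_{max}$; Lamé constants $\mu>0$, $2\mu+\lambda>0$; $k_p=\omega/\sqrt{\lambda+2\mu}$. $\mathbb{S}$ is the unit circle. The compressional far field of the source is $u^\infty_{\mathbf{F},p}(\hat{\mathbf{x}},\omega)=\int_{\mathbb{R}^2}e^{-ik_p\hat{\mathbf{x}}\cdot\mathbf{y}}\hat{\mathbf{x}}\cdot\mathbf{F}(\mathbf{y})d\mathbf{y}$, and with an added point source at $\mathbf{z}$ with strength $\tau$ and polarization $\mathbf{q}$: $u^\infty_{\mathbf{F}\cup\{\mathbf{z}\},p}(\hat{\mathbf{x}},\mathbf{q},\omega,\tau)=u^\infty_{\mathbf{F},p}(\hat{\mathbf{x}},\omega)+\tau e^{-ik_p\hat{\mathbf{x}}\cdot\mathbf{z}}\,\mathbf{q}\cdot\hat{\mathbf{x}}$. The $\hat{\mathbf{x}}$-strip hull is $S_\Omega(\hat{\mathbf{x}})=\{\mathbf{y}\in\mathbb{R}^2:\ \inf_{\mathbf{w}\in\Omega}\mathbf{w}\cdot\hat{\mathbf{x}}\le\mathbf{y}\cdot\hat{\mathbf{x}}\le\sup_{\mathbf{w}\in\Omega}\mathbf{w}\cdot\hat{\mathbf{x}}\}$. For $\alpha\in\mathbb{R}$, $\Pi_\alpha=\{\mathbf{y}\in\mathbb{R}^2:\ \mathbf{y}\cdot\hat{\mathbf{x}}_0+\alpha=0\}$ and $f_{\hat{\mathbf{x}}_0}(\alpha)=\int_{\Pi_\alpha}\hat{\mathbf{x}}_0\cdot\mathbf{F}(\mathbf{y})\,ds(\mathbf{y})$.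 *)

theory Defs
  imports "HOL-Analysis.Analysis"
begin

definition rcdot :: "real^2 \<Rightarrow> complex^2 \<Rightarrow> complex" where
  "rcdot x v = (\<Sum>i\<in>UNIV. complex_of_real (x $ i) * v $ i)"

definition kp :: "real \<Rightarrow> real \<Rightarrow> real \<Rightarrow> real" where
  "kp lam mu \<omega> = \<omega> / sqrt (lam + 2 * mu)"

definition uinf_p :: "real \<Rightarrow> real \<Rightarrow> (real^2 \<Rightarrow> complex^2) \<Rightarrow> real^2 \<Rightarrow> real \<Rightarrow> complex" where
  "uinf_p lam mu F xh \<omega> =
     (LINT y|lborel. exp (- \<i> * complex_of_real (kp lam mu \<omega> * (xh \<bullet> y))) * rcdot xh (F y))"

text \<open>Far field of F together with a point source at z of strength tau, polarization q.\<close>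
definition uinf_pt :: "real \<Rightarrow> real \<Rightarrow> (real^2 \<Rightarrow> complex^2) \<Rightarrow> real^2 \<Rightarrow> real^2 \<Rightarrow> real^2
    \<Rightarrow> real \<Rightarrow> complex \<Rightarrow> complex" where
  "uinf_pt lam mu F z xh q \<omega> \<tau> =
     uinf_p lam mu F xh \<omega>
     + \<tau> * exp (- \<i> * complex_of_real (kp lam mu \<omega> * (xh \<bullet> z))) * complex_of_real (q \<bullet> xh)"

definition strip_hull :: "(real^2) set \<Rightarrow> real^2 \<Rightarrow> (real^2) set" where
  "strip_hull \<Omega> xh = {y. (INF w\<in>\<Omega>. w \<bullet> xh) \<le> y \<bullet> xh \<and> y \<bullet> xh \<le> (SUP w\<in>\<Omega>. w \<bullet> xh)}"

definition line_Pi :: "real^2 \<Rightarrow> real \<Rightarrow> (real^2) set" where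
  "line_Pi xh \<alpha> = {y. y \<bullet> xh + \<alpha> = 0}"

definition perp2 :: "real^2 \<Rightarrow> real^2" where
  "perp2 x = (\<chi> i. if i = 1 then - (x $ 2) else x $ 1)"

text \<open>f_xh(alpha) = line integral over Pi_alpha of xh . F, arc-length parametrized as
  t |-> -alpha xh + t perp(xh) (xh a unit vector).\<close>
definition f_line :: "(real^2 \<Rightarrow> complex^2) \<Rightarrow> real^2 \<Rightarrow> real \<Rightarrow> complex" where
  "f_line F xh \<alpha> = (LINT t|lborel. rcdot xh (F ((- \<alpha>) *\<^sub>R xh + t *\<^sub>R perp2 xh)))"

definition admissible_source :: "(real^2 \<Rightarrow> complex^2) \<Rightarrow> (real^2) set \<Rightarrow> bool" where
  "admissible_source F \<Omega> \<longleftrightarrow>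
     open \<Omega> \<and> connected \<Omega> \<and> bounded \<Omega> \<and> \<Omega> \<noteq> {} \<and>
     F \<in> borel_measurable lborel \<and>
     (\<forall>i. integrable lborel (\<lambda>y. (cmod (F y $ i))^2)) \<and>
     (\<forall>y. y \<notin> \<Omega> \<longrightarrow> F y = 0)"

end

theory Submission
  imports Defs "HOL-Probability.Probability" "HOL-Complex_Analysis.Cauchy_Integral_Formula"
begin

text \<open>The point source acts as a known reference wave: at a fixed frequency the data are
  \<open>|A + \<tau> B|\<close> with \<open>A\<close> the far field of \<open>F\<close> and \<open>B \<noteq> 0\<close> known, and three strengths \<open>\<tau>\<close> whose
  differences span \<open>\<complex>\<close> over \<open>\<real>\<close> determine \<open>A\<close>. Integrating first along the lines \<open>\<Pi>\<^sub>\<alpha>\<close> shows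
  that \<open>A\<close> is the one-dimensional Fourier transform of \<open>f_line F x\<^sub>0\<close> at \<open>k\<^sub>p\<close>. Since \<open>f_line F x\<^sub>0\<close>
  has compact support, its Fourier transform extends to an entire function, so knowing it for
  \<open>k\<^sub>p\<close> in an interval determines \<open>f_line F x\<^sub>0\<close> almost everywhere. Finally \<open>f_line F x\<^sub>0\<close> vanishes
  outside the strip, while inside the strip it vanishes only on a null set, so the strip is the
  essential support of \<open>f_line F x\<^sub>0\<close>.\<close>

section \<open>Fourier analysis on the real line\<close>

lemma integrable_iexp_mult:
  fixes g :: "real \<Rightarrow> complex"
  assumes "integrable lborel g"
  shows "integrable lborel (\<lambda>x. iexp (t * x) * g x)"
proof -
  have [measurable]: "g \<in> borel_measurable lborel" using assms by auto
  show ?thesis by (rule Bochner_Integration.integrable_bound[OF assms]) (auto simp: norm_mult)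
qed

lemma real_distribution_density_normalized:
  fixes q :: "real \<Rightarrow> real"
  assumes q: "integrable lborel q" "\<And>x. 0 \<le> q x" and c: "integral\<^sup>L lborel q = c" "0 < c"
  shows "real_distribution (density lborel (\<lambda>x. ennreal (q x / c)))"
proof -
  have [measurable]: "q \<in> borel_measurable lborel" using q by auto
  have "emeasure (density lborel (\<lambda>x. ennreal (q x / c))) UNIV = (\<integral>\<^sup>+x. ennreal (q x / c) \<partial>lborel)"
    by (simp add: emeasure_density)
  also have "\<dots> = ennreal (integral\<^sup>L lborel (\<lambda>x. q x / c))"
    using q c by (intro nn_integral_eq_integral) auto
  also have "\<dots> = 1" using c by simp
  finally have "prob_space (density lborel (\<lambda>x. ennreal (q x / c)))"
    by (intro prob_spaceI) simp
  then show ?thesis unfolding real_distribution_def real_distribution_axioms_def by simp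
qed

lemma char_density_normalized:
  fixes q :: "real \<Rightarrow> real"
  assumes q: "integrable lborel q" "\<And>x. 0 \<le> q x" and c: "0 < c"
  shows "char (density lborel (\<lambda>x. ennreal (q x / c))) t = (CLINT x|lborel. iexp (t * x) * q x) / c"
proof -
  have [measurable]: "q \<in> borel_measurable lborel" using q by auto
  have "char (density lborel (\<lambda>x. ennreal (q x / c))) t = (CLINT x|lborel. (q x / c) *\<^sub>R iexp (t * x))"
    unfolding char_def by (rule integral_density) (auto simp: q c less_imp_le)
  also have "\<dots> = (CLINT x|lborel. iexp (t * x) * q x / c)"
    by (intro Bochner_Integration.integral_cong) (auto simp: scaleR_conv_of_real)
  finally show ?thesis by simp
qed

lemma fourier_uniqueness_nonneg:
  fixes p q :: "real \<Rightarrow> real"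
  assumes p: "integrable lborel p" "\<And>x. 0 \<le> p x" and q: "integrable lborel q" "\<And>x. 0 \<le> q x"
    and eq: "\<And>t. (CLINT x|lborel. iexp (t * x) * p x) = (CLINT x|lborel. iexp (t * x) * q x)"
  shows "AE x in lborel. p x = q x"
proof -
  have [measurable]: "p \<in> borel_measurable lborel" "q \<in> borel_measurable lborel"
    using p q by auto
  define c where "c = integral\<^sup>L lborel p"
  have cq: "integral\<^sup>L lborel q = c" using eq[of 0] unfolding c_def by simp
  have "0 \<le> c" unfolding c_def using p by (intro integral_nonneg_AE) auto
  then consider "c = 0" | "0 < c" by linarith
  then show ?thesis
  proof cases
    case 1
    have "AE x in lborel. p x = 0" "AE x in lborel. q x = 0"
      using integral_nonneg_eq_0_iff_AE[OF p(1)] integral_nonneg_eq_0_iff_AE[OF q(1)] p(2) q(2) 1 cq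
      unfolding c_def by auto
    then show ?thesis by eventually_elim simp
  next
    case 2
    have "density lborel (\<lambda>x. ennreal (p x / c)) = density lborel (\<lambda>x. ennreal (q x / c))"
    proof (rule Levy_uniqueness)
      show "real_distribution (density lborel (\<lambda>x. ennreal (p x / c)))"
        using p 2 by (intro real_distribution_density_normalized) (auto simp: c_def)
      show "real_distribution (density lborel (\<lambda>x. ennreal (q x / c)))"
        using q 2 cq by (intro real_distribution_density_normalized) auto
      show "char (density lborel (\<lambda>x. ennreal (p x / c))) = char (density lborel (\<lambda>x. ennreal (q x / c)))"
        using p q 2 eq by (simp add: char_density_normalized fun_eq_iff)
    qed
    then have "AE x in lborel. ennreal (p x / c) = ennreal (q x / c)"
      by (subst (asm) sigma_finite_measure.density_unique_iff[OF sigma_finite_lborel]) auto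
    then show ?thesis
      by eventually_elim (use 2 p q in \<open>simp add: ennreal_inj\<close>)
  qed
qed

lemma fourier_uniqueness_real:
  fixes r :: "real \<Rightarrow> real"
  assumes r: "integrable lborel r" and ft: "\<And>t. (CLINT x|lborel. iexp (t * x) * r x) = 0"
  shows "AE x in lborel. r x = 0"
proof -
  have pos: "integrable lborel (\<lambda>x. max (r x) 0)" and neg: "integrable lborel (\<lambda>x. max (- r x) 0)"
    using r by (auto intro!: integrable_max)
  have "AE x in lborel. max (r x) 0 = max (- r x) 0"
  proof (rule fourier_uniqueness_nonneg[OF pos _ neg])
    fix t
    have "(CLINT x|lborel. iexp (t * x) * max (r x) 0) - (CLINT x|lborel. iexp (t * x) * max (- r x) 0)
        = (CLINT x|lborel. iexp (t * x) * max (r x) 0 - iexp (t * x) * max (- r x) 0)"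
      using pos neg by (intro Bochner_Integration.integral_diff[symmetric] integrable_iexp_mult) auto
    also have "\<dots> = (CLINT x|lborel. iexp (t * x) * r x)"
      by (intro Bochner_Integration.integral_cong) (auto simp: max_def algebra_simps)
    finally show "(CLINT x|lborel. iexp (t * x) * max (r x) 0) = (CLINT x|lborel. iexp (t * x) * max (- r x) 0)"
      using ft by simp
  qed auto
  then show ?thesis by eventually_elim (auto simp: max_def split: if_splits)
qed

lemma fourier_uniqueness:
  fixes g :: "real \<Rightarrow> complex"
  assumes g: "integrable lborel g" and ft: "\<And>t. (CLINT x|lborel. iexp (t * x) * g x) = 0"
  shows "AE x in lborel. g x = 0"
proof -
  have [measurable]: "g \<in> borel_measurable lborel" using g by auto
  have ft_cnj: "(CLINT x|lborel. iexp (t * x) * cnj (g x)) = 0" for t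
  proof -
    have "(CLINT x|lborel. iexp (t * x) * cnj (g x)) = (CLINT x|lborel. cnj (iexp (- t * x) * g x))"
      by (intro Bochner_Integration.integral_cong) (auto simp: exp_cnj)
    also have "\<dots> = 0"
      using ft[of "- t"] Bochner_Integration.integral_cnj[of lborel "\<lambda>x. iexp (- t * x) * g x"] by simp
    finally show ?thesis .
  qed
  have ft_comb: "(CLINT x|lborel. iexp (t * x) * (a * g x + b * cnj (g x))) = 0" for a b t
  proof -
    have "(CLINT x|lborel. iexp (t * x) * (a * g x + b * cnj (g x)))
        = a * (CLINT x|lborel. iexp (t * x) * g x) + b * (CLINT x|lborel. iexp (t * x) * cnj (g x))"
      using integrable_iexp_mult[OF g, of t] integrable_iexp_mult[of "\<lambda>x. cnj (g x)" t] g
      by (simp add: algebra_simps)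
    then show ?thesis using ft ft_cnj by simp
  qed
  have "AE x in lborel. Re (g x) = 0"
  proof (rule fourier_uniqueness_real)
    fix t
    have "complex_of_real (Re z) = (1/2) * z + (1/2) * cnj z" for z
      by (simp add: complex_eq_iff)
    then show "(CLINT x|lborel. iexp (t * x) * Re (g x)) = 0"
      using ft_comb[of t "1/2" "1/2"] by simp
  qed (use g in simp)
  moreover have "AE x in lborel. Im (g x) = 0"
  proof (rule fourier_uniqueness_real)
    fix t
    have "complex_of_real (Im z) = (- \<i> / 2) * z + (\<i> / 2) * cnj z" for z
      by (simp add: complex_eq_iff)
    then show "(CLINT x|lborel. iexp (t * x) * Im (g x)) = 0"
      using ft_comb[of t "- \<i> / 2" "\<i> / 2"] by simp
  qed (use g in simp)
  ultimately show ?thesis by eventually_elim (simp add: complex_eq_iff)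
qed

definition fourier_laplace :: "(real \<Rightarrow> complex) \<Rightarrow> complex \<Rightarrow> complex" where
  "fourier_laplace g s = (CLINT x|lborel. exp (\<i> * s * of_real x) * g x)"

lemma fourier_laplace_of_real:
  "fourier_laplace g (of_real t) = (CLINT x|lborel. iexp (t * x) * g x)"
  by (simp add: fourier_laplace_def mult.assoc)

lemma fourier_laplace_shift:
  "fourier_laplace (\<lambda>x. iexp (m * x) * g x) s = fourier_laplace g (s + of_real m)"
proof -
  have "exp (\<i> * (s + of_real m) * of_real x) = exp (\<i> * s * of_real x) * iexp (m * x)" for x
    by (subst exp_add[symmetric]) (simp add: algebra_simps)
  then show ?thesis by (simp add: fourier_laplace_def mult.assoc)
qed

lemma sum_power_divide_fact_le_exp:
  fixes r :: real
  assumes "0 \<le> r"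
  shows "(\<Sum>n<N. r ^ n / fact n) \<le> exp r"
proof -
  have "(\<Sum>n<N. r ^ n /\<^sub>R fact n) \<le> exp r"
    unfolding exp_def using assms by (intro sum_le_suminf summable_exp_generic) auto
  then show ?thesis by (simp add: divide_inverse_commute)
qed

lemma norm_exp_term_le:
  assumes "\<bar>x\<bar> \<le> R"
  shows "norm ((\<i> * s * of_real x) ^ n /\<^sub>R fact n) \<le> (norm s * R) ^ n / fact n"
proof -
  have "(norm s * \<bar>x\<bar>) ^ n \<le> (norm s * R) ^ n"
    using assms by (intro power_mono mult_left_mono) auto
  then have "(norm s * \<bar>x\<bar>) ^ n / fact n \<le> (norm s * R) ^ n / fact n"
    by (rule divide_right_mono) simp
  then show ?thesis
    by (simp add: norm_mult norm_power divide_inverse_commute)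
qed

lemma fourier_laplace_sums:
  fixes g :: "real \<Rightarrow> complex"
  assumes g: "integrable lborel g" and "0 \<le> R" and supp: "\<And>x. R < \<bar>x\<bar> \<Longrightarrow> g x = 0"
  shows "(\<lambda>n. (CLINT x|lborel. (\<i> * of_real x) ^ n /\<^sub>R fact n * g x) * s ^ n) sums fourier_laplace g s"
proof -
  have [measurable]: "g \<in> borel_measurable lborel" using g by auto
  define T where "T n x = (\<i> * s * of_real x) ^ n /\<^sub>R fact n * g x" for n x
  have [measurable]: "T n \<in> borel_measurable lborel" for n unfolding T_def by measurable
  have T_bound: "norm (T n x) \<le> (norm s * R) ^ n / fact n * norm (g x)" for n x
  proof (cases "R < \<bar>x\<bar>")
    case False
    then show ?thesis
      unfolding T_def norm_mult by (intro mult_right_mono norm_exp_term_le) auto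
  qed (simp add: T_def supp)
  have T_integrable: "integrable lborel (T n)" for n
  proof (rule Bochner_Integration.integrable_bound)
    show "integrable lborel (\<lambda>x. (norm s * R) ^ n / fact n * norm (g x))" using g by simp
    show "AE x in lborel. norm (T n x) \<le> norm ((norm s * R) ^ n / fact n * norm (g x))"
      by (intro AE_I2 order_trans[OF T_bound]) (simp only: real_norm_def abs_ge_self)
  qed simp
  have partial_sum_bound: "norm (\<Sum>n<N. T n x) \<le> exp (norm s * R) * norm (g x)" for N x
  proof -
    have "norm (\<Sum>n<N. T n x) \<le> (\<Sum>n<N. (norm s * R) ^ n / fact n) * norm (g x)"
      unfolding sum_distrib_right by (intro norm_sum[THEN order_trans] sum_mono T_bound)
    also have "\<dots> \<le> exp (norm s * R) * norm (g x)"
      using \<open>0 \<le> R\<close> by (intro mult_right_mono sum_power_divide_fact_le_exp) auto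
    finally show ?thesis .
  qed
  have partial_sums: "(\<lambda>N. \<Sum>n<N. T n x) \<longlonglongrightarrow> exp (\<i> * s * of_real x) * g x" for x
    using sums_mult2[OF exp_converges[of "\<i> * s * of_real x"], of "g x"] unfolding sums_def T_def .
  have "(\<lambda>N. CLINT x|lborel. \<Sum>n<N. T n x) \<longlonglongrightarrow> fourier_laplace g s"
    unfolding fourier_laplace_def
  proof (rule integral_dominated_convergence[where w="\<lambda>x. exp (norm s * R) * norm (g x)"])
    show "integrable lborel (\<lambda>x. exp (norm s * R) * norm (g x))" using g by simp
  qed (measurable, intro AE_I2 partial_sums, intro AE_I2 partial_sum_bound)
  moreover have "(CLINT x|lborel. \<Sum>n<N. T n x) = (\<Sum>n<N. (CLINT x|lborel. (\<i> * of_real x) ^ n /\<^sub>R fact n * g x) * s ^ n)" for N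
  proof -
    have "(CLINT x|lborel. (\<i> * of_real x) ^ n /\<^sub>R fact n * g x) * s ^ n = integral\<^sup>L lborel (T n)" for n
      unfolding T_def
      by (subst integral_mult_left_zero[symmetric], intro Bochner_Integration.integral_cong)
         (auto simp: power_mult_distrib algebra_simps)
    then show ?thesis using T_integrable by (simp add: Bochner_Integration.integral_sum)
  qed
  ultimately show ?thesis unfolding sums_def by simp
qed

lemma fourier_vanishes_if_vanishes_on_interval:
  fixes g :: "real \<Rightarrow> complex"
  assumes g: "integrable lborel g" and R: "0 \<le> R" and supp: "\<And>x. R < \<bar>x\<bar> \<Longrightarrow> g x = 0"
    and "a < b" and vanish: "\<And>k. a < k \<Longrightarrow> k < b \<Longrightarrow> (CLINT x|lborel. iexp (k * x) * g x) = 0"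
  shows "(CLINT x|lborel. iexp (t * x) * g x) = 0"
proof -
  txt \<open>The power series of \<open>fourier_laplace g\<close> at the midpoint \<open>m\<close> converges everywhere; a nonzero
    coefficient would make \<open>m\<close> an isolated zero, but \<open>fourier_laplace g\<close> vanishes on \<open>(a, b)\<close>.\<close>
  define m where "m = (a + b) / 2"
  define c where "c n = (CLINT x|lborel. (\<i> * of_real x) ^ n /\<^sub>R fact n * (iexp (m * x) * g x))" for n
  have sums: "(\<lambda>n. c n * s ^ n) sums fourier_laplace g (s + of_real m)" for s
    unfolding c_def fourier_laplace_shift[symmetric]
    by (rule fourier_laplace_sums[OF integrable_iexp_mult[OF g] R]) (simp add: supp)
  have vanish_near_m: "fourier_laplace g (of_real d + of_real m) = 0" if "\<bar>d\<bar> < (b - a) / 2" for d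
  proof -
    have "a < d + m \<and> d + m < b"
      using that m_def by (auto simp: abs_less_iff field_simps)
    then show ?thesis using vanish[of "d + m"] by (simp flip: of_real_add add: fourier_laplace_of_real)
  qed
  have "c n = 0" for n
  proof (rule ccontr)
    assume cn: "c n \<noteq> 0"
    have "c 0 = 0" using sums[of 0] vanish_near_m[of 0] \<open>a < b\<close> by simp
    with cn have "0 < n" by (cases n) auto
    obtain r where r: "0 < r"
      and nonzero: "\<And>z. z \<in> cball 0 r - {0} \<Longrightarrow> fourier_laplace g (z + of_real m) \<noteq> 0"
      by (rule powser_0_nonzero[where r=1 and \<xi>=0 and a=c and f="\<lambda>s. fourier_laplace g (s + of_real m)"])
         (use sums vanish_near_m[of 0] \<open>a < b\<close> cn \<open>0 < n\<close> in auto)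
    define d where "d = min r ((b - a) / 2) / 2"
    have "fourier_laplace g (of_real d + of_real m) \<noteq> 0"
      using r \<open>a < b\<close> by (intro nonzero) (auto simp: d_def min_def)
    moreover have "fourier_laplace g (of_real d + of_real m) = 0"
      using r \<open>a < b\<close> by (intro vanish_near_m) (auto simp: d_def min_def)
    ultimately show False by contradiction
  qed
  then have "fourier_laplace g (of_real (t - m) + of_real m) = 0"
    using sums[of "of_real (t - m)"] by (simp add: sums_iff)
  then show ?thesis by (simp add: fourier_laplace_of_real)
qed

section \<open>Coordinates adapted to the lines \<open>\<Pi>\<^sub>\<alpha>\<close>\<close>

lemma inner_vec2: "(x::real^2) \<bullet> y = x$1 * y$1 + x$2 * y$2"
  by (simp add: inner_vec_def sum_2)

lemma norm_eq_1_vec2: "norm (x::real^2) = 1 \<longleftrightarrow> x$1 * x$1 + x$2 * x$2 = 1"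
  by (simp add: norm_eq_1 inner_vec2)

lemma perp2_nth [simp]: "perp2 x $ 1 = - (x $ 2)" "perp2 x $ 2 = x $ 1"
  by (simp_all add: perp2_def)

definition vec2_of_pair :: "real \<times> real \<Rightarrow> real^2" where
  "vec2_of_pair p = (\<chi> i. if i = 1 then fst p else snd p)"

lemma vec2_of_pair_nth [simp]: "vec2_of_pair p $ 1 = fst p" "vec2_of_pair p $ 2 = snd p"
  by (simp_all add: vec2_of_pair_def)

lemma measurable_vec2_of_pair [measurable]: "vec2_of_pair \<in> borel_measurable borel"
proof (rule borel_measurable_continuous_onI)
  show "continuous_on UNIV vec2_of_pair"
    unfolding vec2_of_pair_def
  proof (intro continuous_on_vec_lambda)
    fix i :: 2
    show "continuous_on UNIV (\<lambda>p. if i = 1 then fst p else snd p :: real)"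
      by (cases "i = 1") (auto intro!: continuous_intros)
  qed
qed

lemma prod_Basis_vec2: "(\<Prod>b\<in>(Basis::(real^2) set). f b) = f (axis 1 1) * f (axis 2 1)"
proof -
  have Basis: "(Basis::(real^2) set) = {axis 1 1, axis 2 1}"
    by (auto simp: Basis_vec_def UNIV_2)
  have "axis 1 (1::real) \<noteq> (axis 2 1 :: real^2)"
    by (simp add: axis_eq_axis)
  then show ?thesis unfolding Basis by simp
qed

lemma distr_vec2_of_pair: "distr lborel borel vec2_of_pair = lborel"
proof (rule lborel_eqI[symmetric])
  fix l u :: "real^2"
  assume "\<And>b. b \<in> Basis \<Longrightarrow> l \<bullet> b \<le> u \<bullet> b"
  from this[of "axis 1 1"] this[of "axis 2 1"] have le: "l$1 \<le> u$1" "l$2 \<le> u$2"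
    by (auto simp: Basis_vec_def inner_axis)
  have "vec2_of_pair -` box l u = {l$1<..<u$1} \<times> {l$2<..<u$2}"
    by (auto simp: mem_box_cart forall_2)
  then have "emeasure (distr lborel borel vec2_of_pair) (box l u)
      = emeasure (lborel \<Otimes>\<^sub>M lborel) ({l$1<..<u$1} \<times> {l$2<..<u$2})"
    by (subst emeasure_distr) (auto simp: lborel_prod)
  also have "\<dots> = ennreal (u$1 - l$1) * ennreal (u$2 - l$2)"
    by (simp add: lborel.emeasure_pair_measure_Times le)
  also have "\<dots> = ennreal (\<Prod>b\<in>Basis. (u - l) \<bullet> b)"
    by (simp add: prod_Basis_vec2 inner_axis ennreal_mult le)
  finally show "emeasure (distr lborel borel vec2_of_pair) (box l u) = (\<Prod>b\<in>Basis. (u - l) \<bullet> b)" .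
qed simp

lemma distr_orthogonal_transformation:
  fixes f :: "real^'n::{finite,wellorder} \<Rightarrow> real^'n::_"
  assumes orth: "orthogonal_transformation f"
  shows "distr lborel borel f = lborel"
proof (rule lborel_eqI[symmetric])
  fix l u :: "real^'n::_"
  assume le: "\<And>b. b \<in> Basis \<Longrightarrow> l \<bullet> b \<le> u \<bullet> b"
  have f_measurable: "f \<in> borel_measurable borel"
    using orth by (intro borel_measurable_continuous_onI linear_continuous_on
        orthogonal_transformation_linear[THEN linear_conv_bounded_linear[THEN iffD1]])
  have preimage: "f -` box l u = inv f ` box l u"
    using orthogonal_transformation_bij[OF orth] by (rule bij_vimage_eq_inv_image)
  have "box l u \<in> lmeasurable" by simp
  then have lmeas: "inv f ` box l u \<in> lmeasurable"
    and meas: "measure lebesgue (inv f ` box l u) = measure lebesgue (box l u)"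
    using orthogonal_transformation_inv[OF orth]
    by (simp_all add: measurable_orthogonal_image measure_orthogonal_image)
  have "f -` box l u \<in> sets lborel"
    using measurable_sets_borel[OF f_measurable] by simp
  then have "emeasure (distr lborel borel f) (box l u) = emeasure lebesgue (inv f ` box l u)"
    using f_measurable by (subst emeasure_distr) (auto simp: preimage[symmetric])
  also have "\<dots> = emeasure lborel (box l u)"
    using lmeas meas \<open>box l u \<in> lmeasurable\<close> by (simp add: emeasure_eq_measure2)
  also have "\<dots> = (\<Prod>b\<in>Basis. (u - l) \<bullet> b)"
    using le by (simp add: emeasure_lborel_box_eq)
  finally show "emeasure (distr lborel borel f) (box l u) = (\<Prod>b\<in>Basis. (u - l) \<bullet> b)" .
qed simp

definition frame_rotation :: "real^2 \<Rightarrow> real^2 \<Rightarrow> real^2" where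
  "frame_rotation x v = (- (v$1)) *\<^sub>R x + (v$2) *\<^sub>R perp2 x"

lemma measurable_frame_rotation [measurable]: "frame_rotation x \<in> borel_measurable borel"
  unfolding frame_rotation_def by (intro borel_measurable_continuous_onI) (auto intro!: continuous_intros)

lemma orthogonal_transformation_frame_rotation:
  assumes "norm x = 1"
  shows "orthogonal_transformation (frame_rotation x)"
  unfolding orthogonal_transformation_def
proof (intro conjI allI)
  show "linear (frame_rotation x)"
    by (intro linearI) (simp_all add: frame_rotation_def algebra_simps)
  fix v w
  show "frame_rotation x v \<bullet> frame_rotation x w = v \<bullet> w"
    using assms unfolding norm_eq_1_vec2 by (simp add: frame_rotation_def inner_vec2) algebra
qed

definition line_coords :: "real^2 \<Rightarrow> real \<times> real \<Rightarrow> real^2" where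
  "line_coords x p = (- fst p) *\<^sub>R x + snd p *\<^sub>R perp2 x"

lemma line_coords_eq_frame_rotation: "line_coords x = frame_rotation x \<circ> vec2_of_pair"
  by (auto simp: line_coords_def frame_rotation_def)

lemma measurable_line_coords [measurable]: "line_coords x \<in> borel_measurable borel"
  unfolding line_coords_eq_frame_rotation by measurable

lemma inner_line_coords: "norm x = 1 \<Longrightarrow> line_coords x p \<bullet> x = - fst p"
  unfolding norm_eq_1_vec2 by (simp add: line_coords_def inner_vec2) algebra

lemma f_line_eq_line_coords: "f_line F x a = (CLINT t|lborel. rcdot x (F (line_coords x (a, t))))"
  by (simp add: f_line_def line_coords_def)

lemma distr_line_coords:
  assumes "norm x = 1"
  shows "distr lborel borel (line_coords x) = lborel"
proof -
  have "distr lborel borel (line_coords x) = distr (distr lborel borel vec2_of_pair) borel (frame_rotation x)"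
    unfolding line_coords_eq_frame_rotation by (subst distr_distr) auto
  also have "\<dots> = lborel"
    using orthogonal_transformation_frame_rotation[OF assms]
    by (simp add: distr_vec2_of_pair distr_orthogonal_transformation)
  finally show ?thesis .
qed

lemma
  fixes \<phi> :: "real^2 \<Rightarrow> complex"
  assumes x: "norm x = 1" and \<phi>: "integrable lborel \<phi>"
  shows integrable_line_coords: "integrable (lborel \<Otimes>\<^sub>M lborel) (\<lambda>p. \<phi> (line_coords x p))"
    and integral_line_coords: "integral\<^sup>L lborel \<phi> = (\<integral>a. (\<integral>t. \<phi> (line_coords x (a, t)) \<partial>lborel) \<partial>lborel)"
proof -
  have [measurable]: "\<phi> \<in> borel_measurable borel"
    using \<phi> by auto
  have "integrable (distr lborel borel (line_coords x)) \<phi>"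
    using \<phi> by (simp add: distr_line_coords[OF x])
  then show int: "integrable (lborel \<Otimes>\<^sub>M lborel) (\<lambda>p. \<phi> (line_coords x p))"
    by (subst (asm) integrable_distr_eq) (auto simp: lborel_prod)
  have "integral\<^sup>L lborel \<phi> = integral\<^sup>L (distr lborel borel (line_coords x)) \<phi>"
    by (simp add: distr_line_coords[OF x])
  also have "\<dots> = integral\<^sup>L (lborel \<Otimes>\<^sub>M lborel) (\<lambda>p. \<phi> (line_coords x p))"
    by (subst integral_distr) (auto simp: lborel_prod)
  also have "\<dots> = (\<integral>a. (\<integral>t. \<phi> (line_coords x (a, t)) \<partial>lborel) \<partial>lborel)"
    using lborel_pair.integral_fst'[OF int] by simp
  finally show "integral\<^sup>L lborel \<phi> = (\<integral>a. (\<integral>t. \<phi> (line_coords x (a, t)) \<partial>lborel) \<partial>lborel)" .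
qed

section \<open>Admissible sources and their line integrals\<close>

lemma admissible_source_outside: "admissible_source F \<Omega> \<Longrightarrow> y \<notin> \<Omega> \<Longrightarrow> F y = 0"
  unfolding admissible_source_def by blast

lemma rcdot_zero [simp]: "rcdot x 0 = 0"
  by (simp add: rcdot_def)

lemma le_one_plus_square: "(z::real) \<le> 1 + z\<^sup>2"
proof (cases "z \<le> 1")
  case False
  then have "z * 1 \<le> z * z" by (intro mult_left_mono) auto
  then show ?thesis by (simp add: power2_eq_square)
qed (use zero_le_power2[of z] in linarith)

text \<open>On the bounded set \<open>\<Omega>\<close> the bound \<open>|F| \<le> 1 + |F|\<^sup>2\<close> gives \<open>L\<^sup>2 \<subseteq> L\<^sup>1\<close>.\<close>
lemma admissible_source_integrable:
  assumes adm: "admissible_source F \<Omega>"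
  shows "integrable lborel (\<lambda>y. rcdot x (F y))"
proof -
  have [measurable]: "F \<in> borel_measurable lborel"
    and sq: "\<And>i. integrable lborel (\<lambda>y. (cmod (F y $ i))\<^sup>2)" and "bounded \<Omega>" "open \<Omega>"
    using adm unfolding admissible_source_def by auto
  have "integrable lborel (\<lambda>y. F y $ i)" for i
  proof (rule Bochner_Integration.integrable_bound[where f="\<lambda>y. indicator \<Omega> y + (cmod (F y $ i))\<^sup>2"])
    show "integrable lborel (\<lambda>y. indicator \<Omega> y + (cmod (F y $ i))\<^sup>2 :: real)"
      using \<open>open \<Omega>\<close> emeasure_bounded_finite[OF \<open>bounded \<Omega>\<close>]
      by (intro Bochner_Integration.integrable_add sq integrable_real_indicator) auto
    have "(\<lambda>v::complex^2. v $ i) \<in> borel_measurable borel"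
      by (intro borel_measurable_continuous_onI continuous_on_component continuous_on_id)
    then show "(\<lambda>y. F y $ i) \<in> borel_measurable lborel"
      by measurable
    show "AE y in lborel. norm (F y $ i) \<le> norm (indicator \<Omega> y + (cmod (F y $ i))\<^sup>2 :: real)"
      using admissible_source_outside[OF adm] le_one_plus_square[of "cmod (F _ $ i)"]
      by (intro AE_I2) (auto simp: indicator_def)
  qed
  then show ?thesis unfolding rcdot_def
    by (intro Bochner_Integration.integrable_sum integrable_mult_right)
qed

lemma f_line_integrable:
  assumes "admissible_source F \<Omega>" and "norm x = 1"
  shows "integrable lborel (f_line F x)"
  using lborel_pair.integrable_fst'[OF integrable_line_coords[OF assms(2) admissible_source_integrable[OF assms(1)]]]
  by (simp add: f_line_eq_line_coords[abs_def])

lemma f_line_eq_0_far: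
  assumes adm: "admissible_source F \<Omega>" and x: "norm x = 1"
  obtains R where "0 \<le> R" "\<And>\<alpha>. R < \<bar>\<alpha>\<bar> \<Longrightarrow> f_line F x \<alpha> = 0"
proof -
  obtain R where "0 \<le> R" and R: "\<And>w. w \<in> \<Omega> \<Longrightarrow> norm w \<le> R"
    using adm unfolding admissible_source_def bounded_iff by (metis norm_ge_zero order_trans)
  have "f_line F x \<alpha> = 0" if "R < \<bar>\<alpha>\<bar>" for \<alpha>
  proof -
    have "line_coords x (\<alpha>, t) \<notin> \<Omega>" for t
    proof
      assume "line_coords x (\<alpha>, t) \<in> \<Omega>"
      then have "\<bar>line_coords x (\<alpha>, t) \<bullet> x\<bar> \<le> R"
        using Cauchy_Schwarz_ineq2[of _ x] R x by (metis mult.right_neutral order_trans)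
      then show False using that inner_line_coords[OF x] by simp
    qed
    then show ?thesis
      by (simp add: f_line_eq_line_coords admissible_source_outside[OF adm])
  qed
  with \<open>0 \<le> R\<close> show ?thesis by (rule that)
qed

lemma uinf_p_eq_fourier_f_line:
  assumes adm: "admissible_source F \<Omega>" and x: "norm x = 1"
  shows "uinf_p lam mu F x \<omega> = (CLINT a|lborel. iexp (kp lam mu \<omega> * a) * f_line F x a)"
proof -
  define k where "k = kp lam mu \<omega>"
  define \<phi> where "\<phi> y = exp (- \<i> * complex_of_real (k * (x \<bullet> y))) * rcdot x (F y)" for y
  have int: "integrable lborel (\<lambda>y. rcdot x (F y))"
    using adm by (rule admissible_source_integrable)
  have "integrable lborel \<phi>"
    unfolding \<phi>_def
  proof (rule Bochner_Integration.integrable_bound[OF int])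
    show "(\<lambda>y. exp (- \<i> * complex_of_real (k * (x \<bullet> y))) * rcdot x (F y)) \<in> borel_measurable lborel"
      using int by (intro borel_measurable_times borel_measurable_continuous_onI) (auto intro!: continuous_intros)
    have "norm (exp (- \<i> * complex_of_real (k * (x \<bullet> y)))) = 1" for y
      using norm_exp_i_times[of "- (k * (x \<bullet> y))"] by simp
    then show "AE y in lborel. norm (exp (- \<i> * complex_of_real (k * (x \<bullet> y))) * rcdot x (F y)) \<le> norm (rcdot x (F y))"
      by (simp add: norm_mult)
  qed
  then have "uinf_p lam mu F x \<omega> = (\<integral>a. (\<integral>t. \<phi> (line_coords x (a, t)) \<partial>lborel) \<partial>lborel)"
    unfolding uinf_p_def \<phi>_def k_def by (rule integral_line_coords[OF x, unfolded \<phi>_def k_def])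
  also have "\<dots> = (CLINT a|lborel. iexp (k * a) * f_line F x a)"
    using inner_line_coords[OF x] by (simp add: \<phi>_def f_line_eq_line_coords inner_commute)
  finally show ?thesis unfolding k_def .
qed

section \<open>From phaseless data to the line integrals\<close>

lemma cmod_add_power2: "cmod (a + b) ^ 2 = cmod a ^ 2 + 2 * Re (a * cnj b) + cmod b ^ 2"
  by (simp only: cmod_power2) (simp add: power2_eq_square algebra_simps)

text \<open>With \<open>w = (A\<^sub>1 - A\<^sub>2) cnj B\<close>, the three moduli identities say that \<open>w\<close> is orthogonal, as a vector
  of \<open>\<real>\<^sup>2\<close>, to \<open>t\<^sub>2 - t\<^sub>1\<close> and \<open>t\<^sub>3 - t\<^sub>1\<close>, which span \<open>\<real>\<^sup>2\<close>.\<close>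
lemma phase_retrieval:
  fixes A1 A2 B t1 t2 t3 :: complex
  assumes "B \<noteq> 0"
    and indep: "\<forall>r s :: real. of_real r * (t2 - t1) + of_real s * (t3 - t1) = 0 \<longrightarrow> r = 0 \<and> s = 0"
    and moduli: "\<And>t. t \<in> {t1, t2, t3} \<Longrightarrow> cmod (A1 + t * B) = cmod (A2 + t * B)"
  shows "A1 = A2"
proof (rule ccontr)
  assume "A1 \<noteq> A2"
  define w where "w = (A1 - A2) * cnj B"
  have "cnj w \<noteq> 0" using \<open>A1 \<noteq> A2\<close> \<open>B \<noteq> 0\<close> by (simp add: w_def)
  have expanded: "cmod A1 ^ 2 - cmod A2 ^ 2 + 2 * Re (w * cnj t) = 0" if "t \<in> {t1, t2, t3}" for t
  proof -
    have "cmod (A1 + t * B) ^ 2 = cmod (A2 + t * B) ^ 2" using moduli[OF that] by simp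
    then show ?thesis unfolding cmod_add_power2 w_def by (simp add: algebra_simps)
  qed
  have imaginary: "cnj w * (t - t1) = - \<i> * of_real (Im (w * cnj (t - t1)))" if "t \<in> {t2, t3}" for t
  proof -
    have "Re (w * cnj (t - t1)) = 0" using expanded[of t] expanded[of t1] that by (auto simp: algebra_simps)
    then have "w * cnj (t - t1) = \<i> * of_real (Im (w * cnj (t - t1)))" by (simp add: complex_eq_iff)
    then have "cnj (w * cnj (t - t1)) = cnj (\<i> * of_real (Im (w * cnj (t - t1))))" by simp
    then show ?thesis by simp
  qed
  define a2 where "a2 = Im (w * cnj (t2 - t1))"
  define a3 where "a3 = Im (w * cnj (t3 - t1))"
  have I2: "cnj w * (t2 - t1) = - \<i> * of_real a2" and I3: "cnj w * (t3 - t1) = - \<i> * of_real a3"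
    using imaginary[of t2] imaginary[of t3] by (simp_all add: a2_def a3_def)
  have "cnj w * (of_real a3 * (t2 - t1) + of_real (- a2) * (t3 - t1))
      = of_real a3 * (cnj w * (t2 - t1)) - of_real a2 * (cnj w * (t3 - t1))"
    by (simp add: algebra_simps)
  also have "\<dots> = 0"
    unfolding I2 I3 by (simp add: algebra_simps)
  finally have "of_real a3 * (t2 - t1) + of_real (- a2) * (t3 - t1) = 0"
    using \<open>cnj w \<noteq> 0\<close> by simp
  then have "a2 = 0"
    using indep[rule_format, of a3 "- a2"] by simp
  then have "cnj w * (t2 - t1) = 0"
    using I2 by simp
  then have "t2 = t1"
    using \<open>cnj w \<noteq> 0\<close> by simp
  then show False using indep[rule_format, of 1 0] by simp
qed

lemma uinf_p_eq_if_phaseless_eq: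
  assumes "q \<bullet> x \<noteq> 0"
    and "\<forall>r s :: real. of_real r * (\<tau>2 - \<tau>1) + of_real s * (\<tau>3 - \<tau>1) = 0 \<longrightarrow> r = 0 \<and> s = 0"
    and "\<forall>\<tau>\<in>{\<tau>1, \<tau>2, \<tau>3}. cmod (uinf_pt lam mu F1 z x q \<omega> \<tau>) = cmod (uinf_pt lam mu F2 z x q \<omega> \<tau>)"
  shows "uinf_p lam mu F1 x \<omega> = uinf_p lam mu F2 x \<omega>"
proof -
  define B where "B = exp (- \<i> * of_real (kp lam mu \<omega> * (x \<bullet> z))) * of_real (q \<bullet> x)"
  have "B \<noteq> 0" using assms(1) by (simp add: B_def)
  moreover have "cmod (uinf_p lam mu F1 x \<omega> + \<tau> * B) = cmod (uinf_p lam mu F2 x \<omega> + \<tau> * B)"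
    if "\<tau> \<in> {\<tau>1, \<tau>2, \<tau>3}" for \<tau>
    using bspec[OF assms(3) that] by (simp add: uinf_pt_def B_def mult.assoc)
  ultimately show ?thesis by (rule phase_retrieval[OF _ assms(2)])
qed

lemma f_line_ae_eq_if_uinf_p_eq:
  assumes adm1: "admissible_source F1 \<Omega>1" and adm2: "admissible_source F2 \<Omega>2" and x: "norm x = 1"
    and "\<omega>min < \<omega>max" and "2 * mu + lam > 0"
    and uinf_p_eq: "\<And>\<omega>. \<omega> \<in> {\<omega>min<..<\<omega>max} \<Longrightarrow> uinf_p lam mu F1 x \<omega> = uinf_p lam mu F2 x \<omega>"
  shows "AE \<alpha> in lborel. f_line F1 x \<alpha> = f_line F2 x \<alpha>"
proof -
  define g where "g = (\<lambda>\<alpha>. f_line F1 x \<alpha> - f_line F2 x \<alpha>)"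
  have int1: "integrable lborel (f_line F1 x)" and int2: "integrable lborel (f_line F2 x)"
    using f_line_integrable adm1 adm2 x by blast+
  then have g: "integrable lborel g" by (simp add: g_def)
  obtain R1 R2 where "0 \<le> R1" "\<And>\<alpha>. R1 < \<bar>\<alpha>\<bar> \<Longrightarrow> f_line F1 x \<alpha> = 0"
    and "0 \<le> R2" "\<And>\<alpha>. R2 < \<bar>\<alpha>\<bar> \<Longrightarrow> f_line F2 x \<alpha> = 0"
    using f_line_eq_0_far[OF adm1 x] f_line_eq_0_far[OF adm2 x] by metis
  then have supp: "\<And>\<alpha>. max R1 R2 < \<bar>\<alpha>\<bar> \<Longrightarrow> g \<alpha> = 0" and "0 \<le> max R1 R2"
    by (auto simp: g_def)
  define c where "c = sqrt (lam + 2 * mu)"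
  have "0 < c" using \<open>2 * mu + lam > 0\<close> by (simp add: c_def)
  have vanish: "(CLINT \<alpha>|lborel. iexp (k * \<alpha>) * g \<alpha>) = 0" if "\<omega>min / c < k" "k < \<omega>max / c" for k
  proof -
    have "kp lam mu (c * k) = k" using \<open>0 < c\<close> by (simp add: kp_def c_def)
    moreover have "c * k \<in> {\<omega>min<..<\<omega>max}" using that \<open>0 < c\<close> by (simp add: field_simps)
    ultimately have "(CLINT \<alpha>|lborel. iexp (k * \<alpha>) * f_line F1 x \<alpha>) = (CLINT \<alpha>|lborel. iexp (k * \<alpha>) * f_line F2 x \<alpha>)"
      using uinf_p_eq[of "c * k"] by (simp add: uinf_p_eq_fourier_f_line[OF adm1 x] uinf_p_eq_fourier_f_line[OF adm2 x])
    then show ?thesis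
      using integrable_iexp_mult[OF int1, of k] integrable_iexp_mult[OF int2, of k]
      by (simp add: g_def right_diff_distrib)
  qed
  have "\<omega>min / c < \<omega>max / c" using \<open>\<omega>min < \<omega>max\<close> \<open>0 < c\<close> by (simp add: divide_strict_right_mono)
  then have "AE \<alpha> in lborel. g \<alpha> = 0"
    by (intro fourier_uniqueness[OF g] fourier_vanishes_if_vanishes_on_interval[OF g \<open>0 \<le> max R1 R2\<close> supp _ vanish])
  then show ?thesis by eventually_elim (simp add: g_def)
qed

section \<open>Strip hulls\<close>

definition proj_inf :: "(real^2) set \<Rightarrow> real^2 \<Rightarrow> real" where
  "proj_inf \<Omega> x = (INF w\<in>\<Omega>. w \<bullet> x)"

definition proj_sup :: "(real^2) set \<Rightarrow> real^2 \<Rightarrow> real" where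
  "proj_sup \<Omega> x = (SUP w\<in>\<Omega>. w \<bullet> x)"

lemma strip_hull_eq_proj: "strip_hull \<Omega> x = {y. proj_inf \<Omega> x \<le> y \<bullet> x \<and> y \<bullet> x \<le> proj_sup \<Omega> x}"
  by (simp add: strip_hull_def proj_inf_def proj_sup_def)

lemma bounded_inner_image: "bounded \<Omega> \<Longrightarrow> bounded ((\<lambda>w. w \<bullet> x) ` \<Omega>)"
  by (intro bounded_linear_image bounded_linear_inner_left)

lemma
  assumes "bounded \<Omega>" and "w \<in> \<Omega>"
  shows proj_inf_le: "proj_inf \<Omega> x \<le> w \<bullet> x"
    and le_proj_sup: "w \<bullet> x \<le> proj_sup \<Omega> x"
  using assms bounded_inner_image[OF assms(1), of x] unfolding proj_inf_def proj_sup_def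
  by (auto intro: cINF_lower cSUP_upper bounded_imp_bdd_below bounded_imp_bdd_above)

lemma proj_inf_less_proj_sup:
  assumes "open \<Omega>" "bounded \<Omega>" "\<Omega> \<noteq> {}" and x: "norm x = 1"
  shows "proj_inf \<Omega> x < proj_sup \<Omega> x"
proof -
  obtain w e where "0 < e" "ball w e \<subseteq> \<Omega>"
    using assms(1,3) open_contains_ball by blast
  then have "w - (e/2) *\<^sub>R x \<in> \<Omega>" and "w + (e/2) *\<^sub>R x \<in> \<Omega>"
    using x by (auto simp: dist_norm)
  from proj_inf_le[OF assms(2) this(1)] le_proj_sup[OF assms(2) this(2)]
  have "proj_inf \<Omega> x \<le> (w - (e/2) *\<^sub>R x) \<bullet> x \<and> (w + (e/2) *\<^sub>R x) \<bullet> x \<le> proj_sup \<Omega> x" ..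
  moreover have "(w - (e/2) *\<^sub>R x) \<bullet> x = w \<bullet> x - e/2" and "(w + (e/2) *\<^sub>R x) \<bullet> x = w \<bullet> x + e/2"
    using x by (simp_all add: inner_diff_left inner_add_left norm_eq_1)
  ultimately show ?thesis using \<open>0 < e\<close> by linarith
qed

lemma line_Pi_subset_strip_hull_iff:
  assumes "norm x = 1"
  shows "line_Pi x \<alpha> \<subseteq> strip_hull \<Omega> x \<longleftrightarrow> proj_inf \<Omega> x \<le> - \<alpha> \<and> - \<alpha> \<le> proj_sup \<Omega> x"
proof
  assume "line_Pi x \<alpha> \<subseteq> strip_hull \<Omega> x"
  moreover have "(- \<alpha>) *\<^sub>R x \<in> line_Pi x \<alpha>"
    using assms by (simp add: line_Pi_def norm_eq_1)
  ultimately show "proj_inf \<Omega> x \<le> - \<alpha> \<and> - \<alpha> \<le> proj_sup \<Omega> x"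
    using assms by (auto simp: strip_hull_eq_proj norm_eq_1)
qed (auto simp: strip_hull_eq_proj line_Pi_def)

lemma f_line_eq_0_outside_strip:
  assumes adm: "admissible_source F \<Omega>" and x: "norm x = 1"
    and "\<not> line_Pi x \<alpha> \<subseteq> strip_hull \<Omega> x"
  shows "f_line F x \<alpha> = 0"
proof -
  have "bounded \<Omega>" using adm by (simp add: admissible_source_def)
  have "line_coords x (\<alpha>, t) \<notin> \<Omega>" for t
  proof
    assume w: "line_coords x (\<alpha>, t) \<in> \<Omega>"
    have "proj_inf \<Omega> x \<le> - \<alpha> \<and> - \<alpha> \<le> proj_sup \<Omega> x"
      using proj_inf_le[OF \<open>bounded \<Omega>\<close> w, of x] le_proj_sup[OF \<open>bounded \<Omega>\<close> w, of x]
      by (simp add: inner_line_coords[OF x])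
    with assms(3) show False by (simp add: line_Pi_subset_strip_hull_iff[OF x])
  qed
  then show ?thesis
    by (simp add: f_line_eq_line_coords admissible_source_outside[OF adm])
qed

lemma empty_interval_if_null_zero_set:
  fixes f g :: "real \<Rightarrow> 'a::zero"
  assumes "AE \<alpha> in lborel. f \<alpha> = g \<alpha>" and "{\<alpha>. P \<alpha> \<and> f \<alpha> = 0} \<in> null_sets lebesgue"
    and "\<And>\<alpha>. a < \<alpha> \<Longrightarrow> \<alpha> < b \<Longrightarrow> P \<alpha> \<and> g \<alpha> = 0"
  shows "b \<le> a"
proof (rule ccontr)
  assume "\<not> b \<le> a"
  obtain N where N: "N \<in> null_sets lborel" "{\<alpha>. f \<alpha> \<noteq> g \<alpha>} \<subseteq> N"
    using assms(1) by (auto elim!: AE_E simp: null_sets_def)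
  have null: "{\<alpha>. P \<alpha> \<and> f \<alpha> = 0} \<union> N \<in> null_sets lebesgue"
    using assms(2) null_sets_completionI[OF N(1)] by (rule null_sets.Un)
  have "{a<..<b} \<subseteq> {\<alpha>. P \<alpha> \<and> f \<alpha> = 0} \<union> N"
    using assms(3) N(2) by force
  then have "{a<..<b} \<in> null_sets lebesgue"
    using null_sets_subset[OF null] by simp
  then have "emeasure lborel {a<..<b} = 0"
    by (simp add: null_sets_completion_iff null_sets_def)
  with \<open>\<not> b \<le> a\<close> show False by simp
qed

lemma strip_hull_subset_if_f_line_ae_eq:
  assumes adm1: "admissible_source F1 \<Omega>1" and adm2: "admissible_source F2 \<Omega>2" and x: "norm x = 1"
    and ae: "AE \<alpha> in lborel. f_line F1 x \<alpha> = f_line F2 x \<alpha>"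
    and null: "{\<alpha>. line_Pi x \<alpha> \<subseteq> strip_hull \<Omega>1 x \<and> f_line F1 x \<alpha> = 0} \<in> null_sets lebesgue"
  shows "strip_hull \<Omega>1 x \<subseteq> strip_hull \<Omega>2 x"
proof -
  have nonempty: "proj_inf \<Omega>1 x < proj_sup \<Omega>1 x"
    using adm1 x by (intro proj_inf_less_proj_sup) (auto simp: admissible_source_def)
  have zero_set: "line_Pi x \<alpha> \<subseteq> strip_hull \<Omega>1 x \<and> f_line F2 x \<alpha> = 0"
    if "proj_inf \<Omega>1 x < - \<alpha>" "- \<alpha> < proj_sup \<Omega>1 x"
      and "- \<alpha> < proj_inf \<Omega>2 x \<or> proj_sup \<Omega>2 x < - \<alpha>" for \<alpha>
  proof
    show "line_Pi x \<alpha> \<subseteq> strip_hull \<Omega>1 x"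
      using that(1,2) by (simp add: line_Pi_subset_strip_hull_iff[OF x])
    have "\<not> line_Pi x \<alpha> \<subseteq> strip_hull \<Omega>2 x"
      using that(3) by (auto simp: line_Pi_subset_strip_hull_iff[OF x])
    then show "f_line F2 x \<alpha> = 0"
      by (rule f_line_eq_0_outside_strip[OF adm2 x])
  qed
  have "- proj_inf \<Omega>1 x \<le> - min (proj_inf \<Omega>2 x) (proj_sup \<Omega>1 x)"
    by (rule empty_interval_if_null_zero_set[OF ae null], rule zero_set) (auto simp: min_def split: if_splits)
  moreover have "- max (proj_sup \<Omega>2 x) (proj_inf \<Omega>1 x) \<le> - proj_sup \<Omega>1 x"
    by (rule empty_interval_if_null_zero_set[OF ae null], rule zero_set) (auto simp: max_def split: if_splits)
  ultimately have "proj_inf \<Omega>2 x \<le> proj_inf \<Omega>1 x \<and> proj_sup \<Omega>1 x \<le> proj_sup \<Omega>2 x"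
    using nonempty by (auto simp: min_def max_def split: if_splits)
  then show ?thesis by (auto simp: strip_hull_eq_proj)
qed

theorem theorem3p5:
  fixes \<omega>min \<omega>max lam mu :: real
    and F1 F2 :: "real^2 \<Rightarrow> complex^2"
    and \<Omega>1 \<Omega>2 :: "(real^2) set"
    and z x0 q0 :: "real^2"
    and \<tau>1 \<tau>2 \<tau>3 :: complex
  assumes "0 < \<omega>min" and "\<omega>min < \<omega>max"
    and "mu > 0" and "2 * mu + lam > 0"
    and "admissible_source F1 \<Omega>1" and "admissible_source F2 \<Omega>2"
    and "z \<notin> closure \<Omega>1" and "z \<notin> closure \<Omega>2"
    and "\<tau>1 \<noteq> \<tau>2" and "\<tau>1 \<noteq> \<tau>3" and "\<tau>2 \<noteq> \<tau>3"
    and "\<forall>r s :: real. complex_of_real r * (\<tau>2 - \<tau>1) + complex_of_real s * (\<tau>3 - \<tau>1) = 0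
           \<longrightarrow> r = 0 \<and> s = 0"
    and "norm x0 = 1" and "norm q0 = 1" and "q0 \<bullet> x0 \<noteq> 0"
    and "{\<alpha>. line_Pi x0 \<alpha> \<subseteq> strip_hull \<Omega>1 x0 \<and> f_line F1 x0 \<alpha> = 0} \<in> null_sets lebesgue"
    and "{\<alpha>. line_Pi x0 \<alpha> \<subseteq> strip_hull \<Omega>2 x0 \<and> f_line F2 x0 \<alpha> = 0} \<in> null_sets lebesgue"
    and "\<forall>\<omega>\<in>{\<omega>min<..<\<omega>max}. \<forall>\<tau>\<in>{\<tau>1, \<tau>2, \<tau>3}.
           cmod (uinf_pt lam mu F1 z x0 q0 \<omega> \<tau>) = cmod (uinf_pt lam mu F2 z x0 q0 \<omega> \<tau>)"
  shows "strip_hull \<Omega>1 x0 = strip_hull \<Omega>2 x0"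
proof -
  have uinf_p_eq: "uinf_p lam mu F1 x0 \<omega> = uinf_p lam mu F2 x0 \<omega>" if "\<omega> \<in> {\<omega>min<..<\<omega>max}" for \<omega>
    using assms(15,12) bspec[OF assms(18) that] by (rule uinf_p_eq_if_phaseless_eq)
  have ae: "AE \<alpha> in lborel. f_line F1 x0 \<alpha> = f_line F2 x0 \<alpha>"
    using assms(5,6,13,2,4) uinf_p_eq by (rule f_line_ae_eq_if_uinf_p_eq)
  then have ae': "AE \<alpha> in lborel. f_line F2 x0 \<alpha> = f_line F1 x0 \<alpha>"
    by eventually_elim (rule sym)
  have "strip_hull \<Omega>1 x0 \<subseteq> strip_hull \<Omega>2 x0"
    using assms(5,6,13) ae assms(16) by (rule strip_hull_subset_if_f_line_ae_eq)
  moreover have "strip_hull \<Omega>2 x0 \<subseteq> strip_hull \<Omega>1 x0"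
    using assms(6,5,13) ae' assms(17) by (rule strip_hull_subset_if_f_line_ae_eq)
  ultimately show ?thesis by (rule subset_antisym)
qed
end
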